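(* Let $A$ be a finite multiset of $n$ points in $\mathbb{R}^d$ with mean $\mu$, $\varepsilon>0$ and $\gamma>0$. Let $P\subset\mathbb{R}^d$ be a finite multiset of points (means) such that at least $\frac{7}{10}|P|$ of them are $\gamma$-good. Then the point returned by $\textsc{ComputeWinner}(P)$ is $5\gamma$-good.
   Context: $\mu=\frac1n\sum_{p\in A}p$, $\mathrm{Opt}=\sum_{p\in A}\|p-\mu\|^2$. A point $x$ is $\gamma$-good if $\|x-\mu\|\le\gamma\sqrt{\frac{\varepsilon\,\mathrm{Opt}}{n}}$. $\textsc{ComputeWinner}(P)$: for each $p_j\in P$ let $\rho_j$ be the distance from $p_j$ to its $\lceil\frac{7}{10}|P|\rceil$-th closest point of $P$, and $D_j=\sum_{p\in P,\ \|p-p_j\|\le\rho_j}\|p-p_j\|$; output a $p_j$ minimizing $D_j$. *)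

theory Defs
  imports "HOL-Analysis.Analysis"
begin

text \<open>Finite multisets of points are represented as lists (order irrelevant,
  multiplicities kept). Points live in an arbitrary Euclidean space.\<close>

definition mean :: "'a::euclidean_space list \<Rightarrow> 'a" where
  "mean A = (1 / real (length A)) *\<^sub>R sum_list A"

definition Opt :: "'a::euclidean_space list \<Rightarrow> real" where
  "Opt A = sum_list (map (\<lambda>p. (norm (p - mean A))\<^sup>2) A)"

definition good :: "'a::euclidean_space list \<Rightarrow> real \<Rightarrow> real \<Rightarrow> 'a \<Rightarrow> bool" where
  "good A \<epsilon> \<gamma> x \<longleftrightarrow> norm (x - mean A) \<le> \<gamma> * sqrt (\<epsilon> * Opt A / real (length A))"

text \<open>rho P j: distance from P!j to its ceil(7/10 |P|)-th closest point of P
  (counted with multiplicity, P!j itself included).\<close>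
definition rho :: "'a::euclidean_space list \<Rightarrow> nat \<Rightarrow> real" where
  "rho P j = sort (map (\<lambda>p. dist p (P ! j)) P) ! (nat \<lceil>7 / 10 * real (length P)\<rceil> - 1)"

definition Dval :: "'a::euclidean_space list \<Rightarrow> nat \<Rightarrow> real" where
  "Dval P j = sum_list (map (\<lambda>p. if dist p (P ! j) \<le> rho P j then dist p (P ! j) else 0) P)"

text \<open>j is a possible output index of ComputeWinner(P): it minimizes D_j.\<close>
definition is_winner :: "'a::euclidean_space list \<Rightarrow> nat \<Rightarrow> bool" where
  "is_winner P j \<longleftrightarrow> j < length P \<and> (\<forall>i < length P. Dval P j \<le> Dval P i)"

end

theory Submission
  imports Defs
begin

(* Let G index the points of P within distance r of c, with |G| >= 7/10 |P|.  Each p_i with i in G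
   has all of G within 2r, so rho_i <= 2r; averaging D_i over G and bounding the pairwise distances
   inside the ball by Cauchy-Schwarz gives D_j <= (sqrt 2 |G| + 2 (|P| - |G|)) r for the winner.
   If p_j were farther than 5r from c, its rho_j-ball would meet G in at least |G| - 3/10 |P|
   points, each farther than 4r from p_j, so D_j > 4 r (|G| - 3/10 |P|), which contradicts the
   first bound when |G| >= 7/10 |P|.  Only the centre mean A and the radius matter. *)

definition cball_indices :: "'a::metric_space list \<Rightarrow> 'a \<Rightarrow> real \<Rightarrow> nat set" where
  "cball_indices P c r = {k. k < length P \<and> dist (P ! k) c \<le> r}"

lemma finite_cball_indices [simp]: "finite (cball_indices P c r)"
  by (simp add: cball_indices_def)

lemma cball_indices_subset: "cball_indices P c r \<subseteq> {..<length P}"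
  by (auto simp: cball_indices_def)

lemma mem_cball_indices_imp_nonneg: "i \<in> cball_indices P c r \<Longrightarrow> 0 \<le> r"
  by (auto simp: cball_indices_def intro: order_trans[OF zero_le_dist])

lemma card_Collect_nth_sort:
  "card {k. k < length xs \<and> P (sort xs ! k)} = card {k. k < length xs \<and> P (xs ! k)}"
proof -
  have "card {k. k < length xs \<and> P (sort xs ! k)} = length (filter P (sort xs))"
    by (simp add: length_filter_conv_card)
  also have "\<dots> = length (filter P xs)"
    by (simp add: filter_sort)
  finally show ?thesis
    by (simp add: length_filter_conv_card)
qed

lemma sort_nth_le_iff_card:
  fixes xs :: "'a::linorder list"
  assumes "i < length xs"
  shows "sort xs ! i \<le> t \<longleftrightarrow> i < card {k. k < length xs \<and> xs ! k \<le> t}"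
proof -
  let ?K = "{k. k < length xs \<and> sort xs ! k \<le> t}"
  have "sort xs ! i \<le> t \<longleftrightarrow> i < card ?K"
  proof
    assume "sort xs ! i \<le> t"
    then have "{..i} \<subseteq> ?K"
      using assms by (auto intro: order_trans[OF sorted_nth_mono])
    from card_mono[OF _ this] show "i < card ?K" by simp
  next
    assume "i < card ?K"
    show "sort xs ! i \<le> t"
    proof (rule ccontr)
      assume "\<not> sort xs ! i \<le> t"
      then have "?K \<subseteq> {..<i}"
        using assms sorted_nth_mono[OF sorted_sort, of i] by (force simp: not_less[symmetric])
      from card_mono[OF _ this] \<open>i < card ?K\<close> show False by simp
    qed
  qed
  then show ?thesis using card_Collect_nth_sort[of xs "\<lambda>x. x \<le> t"] by simp
qed

lemma rho_le_iff:
  assumes "P \<noteq> []"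
  shows "rho P i \<le> t \<longleftrightarrow> 7 / 10 * real (length P) \<le> real (card (cball_indices P (P ! i) t))"
proof -
  define q where "q = nat \<lceil>7 / 10 * real (length P)\<rceil>"
  have "0 < q" "q \<le> length P"
    using assms by (auto simp: q_def ceiling_le_iff)
  then have "rho P i \<le> t \<longleftrightarrow> q - 1 < card (cball_indices P (P ! i) t)"
    unfolding rho_def q_def[symmetric]
    by (simp add: sort_nth_le_iff_card cball_indices_def cong: conj_cong)
  also have "\<dots> \<longleftrightarrow> q \<le> card (cball_indices P (P ! i) t)"
    using \<open>0 < q\<close> by linarith
  also have "\<dots> \<longleftrightarrow> 7 / 10 * real (length P) \<le> real (card (cball_indices P (P ! i) t))"
    by (simp add: q_def nat_le_iff ceiling_le_iff)
  finally show ?thesis .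
qed

lemma Dval_eq_sum_cball_indices:
  "Dval P i = (\<Sum>k\<in>cball_indices P (P ! i) (rho P i). dist (P ! k) (P ! i))"
  by (simp add: Dval_def sum_list_sum_nth atLeast0LessThan cball_indices_def sum.If_cases
      Collect_conj_eq Int_commute lessThan_def)

lemma sum_pairwise_norm_diff_sq:
  fixes y :: "'b \<Rightarrow> 'a::real_inner"
  assumes "finite G"
  shows "(\<Sum>i\<in>G. \<Sum>k\<in>G. (norm (y i - y k))\<^sup>2)
    = 2 * real (card G) * (\<Sum>i\<in>G. (norm (y i))\<^sup>2) - 2 * (norm (sum y G))\<^sup>2"
proof -
  have "(norm (sum y G))\<^sup>2 = (\<Sum>i\<in>G. \<Sum>k\<in>G. y i \<bullet> y k)"
    by (simp add: power2_norm_eq_inner inner_sum_left inner_sum_right) (rule sum.swap)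
  moreover have "(norm (y i - y k))\<^sup>2 = (norm (y i))\<^sup>2 + (norm (y k))\<^sup>2 - 2 * (y i \<bullet> y k)" for i k
    by (simp add: power2_norm_eq_inner inner_diff_left inner_diff_right inner_commute)
  ultimately show ?thesis
    by (simp add: sum.distrib sum_subtractf sum_distrib_left mult.assoc
        sum.swap[of "\<lambda>i k. (norm (y k))\<^sup>2"])
qed

text \<open>The triangle inequality alone would only give the bound 2 |G|^2 r, which is too weak for
  the threshold 7/10.\<close>

lemma sum_pairwise_dist_le:
  fixes x :: "'b \<Rightarrow> 'a::real_inner"
  assumes "finite G" and close: "\<And>i. i \<in> G \<Longrightarrow> dist (x i) c \<le> r"
  shows "(\<Sum>i\<in>G. \<Sum>k\<in>G. dist (x k) (x i)) \<le> sqrt 2 * (real (card G))\<^sup>2 * r"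
proof (cases "G = {}")
  case False
  then obtain i where "i \<in> G"
    by blast
  with close have "0 \<le> r"
    by (meson order_trans zero_le_dist)
  define y where "y i = x i - c" for i
  have "(\<Sum>(i, k)\<in>G \<times> G. (dist (x k) (x i))\<^sup>2) = (\<Sum>i\<in>G. \<Sum>k\<in>G. (norm (y i - y k))\<^sup>2)"
    by (simp add: sum.cartesian_product[symmetric] y_def dist_norm norm_minus_commute)
  also have "\<dots> \<le> 2 * real (card G) * (\<Sum>i\<in>G. (norm (y i))\<^sup>2)"
    using \<open>finite G\<close> by (simp add: sum_pairwise_norm_diff_sq)
  also have "\<dots> \<le> 2 * real (card G) * (\<Sum>i\<in>G. r\<^sup>2)"
    using close \<open>0 \<le> r\<close>
    by (intro mult_left_mono sum_mono power_mono) (auto simp: y_def dist_norm)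
  finally have squares: "(\<Sum>(i, k)\<in>G \<times> G. (dist (x k) (x i))\<^sup>2) \<le> 2 * (real (card G))\<^sup>2 * r\<^sup>2"
    by (simp add: power2_eq_square)
  have "(\<Sum>(i, k)\<in>G \<times> G. dist (x k) (x i))\<^sup>2
      \<le> (\<Sum>(i, k)\<in>G \<times> G. (dist (x k) (x i))\<^sup>2) * (real (card G))\<^sup>2"
    using sum_squared_le_sum_of_squares[of "\<lambda>(i, k). dist (x k) (x i)" "G \<times> G"] \<open>finite G\<close>
    by (simp add: case_prod_beta card_cartesian_product power2_eq_square)
  also have "\<dots> \<le> 2 * (real (card G))\<^sup>2 * r\<^sup>2 * (real (card G))\<^sup>2"
    by (rule mult_right_mono[OF squares]) simp
  also have "\<dots> = (sqrt 2 * (real (card G))\<^sup>2 * r)\<^sup>2"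
    by (simp add: power_mult_distrib)
  finally have "(\<Sum>(i, k)\<in>G \<times> G. dist (x k) (x i))\<^sup>2 \<le> (sqrt 2 * (real (card G))\<^sup>2 * r)\<^sup>2" .
  then have "(\<Sum>(i, k)\<in>G \<times> G. dist (x k) (x i)) \<le> sqrt 2 * (real (card G))\<^sup>2 * r"
    by (rule power2_le_imp_le) (use \<open>0 \<le> r\<close> in simp)
  then show ?thesis
    by (simp add: sum.cartesian_product)
qed simp

lemma rho_le_of_mem_majority_cball:
  assumes majority: "7 / 10 * real (length P) \<le> real (card (cball_indices P c r))"
    and i: "i \<in> cball_indices P c r"
  shows "rho P i \<le> 2 * r"
proof -
  have "cball_indices P c r \<subseteq> cball_indices P (P ! i) (2 * r)"
    using i by (auto simp: cball_indices_def intro: order_trans[OF dist_triangle2[of _ _ c]])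
  then have "card (cball_indices P c r) \<le> card (cball_indices P (P ! i) (2 * r))"
    by (simp add: card_mono)
  moreover have "P \<noteq> []"
    using i by (auto simp: cball_indices_def)
  ultimately show ?thesis
    using majority by (simp add: rho_le_iff)
qed

lemma Dval_le_of_mem_majority_cball:
  assumes majority: "7 / 10 * real (length P) \<le> real (card (cball_indices P c r))"
    and i: "i \<in> cball_indices P c r"
  shows "Dval P i \<le> (\<Sum>k\<in>cball_indices P c r. dist (P ! k) (P ! i))
    + 2 * r * (real (length P) - real (card (cball_indices P c r)))"
proof -
  let ?G = "cball_indices P c r" and ?B = "cball_indices P (P ! i) (rho P i)"
  have "0 \<le> r"
    using i by (rule mem_cball_indices_imp_nonneg)
  have "card (?B - ?G) \<le> card ({..<length P} - ?G)"
    using cball_indices_subset by (intro card_mono) auto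
  also have "\<dots> = length P - card ?G"
    by (simp add: card_Diff_subset[OF finite_cball_indices cball_indices_subset])
  finally have card_outside: "real (card (?B - ?G)) \<le> real (length P) - real (card ?G)"
    using card_mono[OF _ cball_indices_subset, of P c r] by (simp add: of_nat_diff)
  have "Dval P i = (\<Sum>k\<in>?B \<inter> ?G. dist (P ! k) (P ! i)) + (\<Sum>k\<in>?B - ?G. dist (P ! k) (P ! i))"
    by (simp add: Dval_eq_sum_cball_indices sum.Int_Diff)
  also have "(\<Sum>k\<in>?B \<inter> ?G. dist (P ! k) (P ! i)) \<le> (\<Sum>k\<in>?G. dist (P ! k) (P ! i))"
    by (intro sum_mono2) auto
  also have "(\<Sum>k\<in>?B - ?G. dist (P ! k) (P ! i)) \<le> real (card (?B - ?G)) * (2 * r)"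
    using rho_le_of_mem_majority_cball[OF majority i]
    by (intro sum_bounded_above) (auto simp: cball_indices_def)
  also have "\<dots> \<le> 2 * r * (real (length P) - real (card ?G))"
    using card_outside \<open>0 \<le> r\<close> by (simp add: mult.commute mult_left_mono)
  finally show ?thesis by simp
qed

lemma Dval_winner_le_of_majority_cball:
  assumes majority: "7 / 10 * real (length P) \<le> real (card (cball_indices P c r))"
    and winner: "is_winner P j"
  shows "Dval P j \<le> (sqrt 2 * real (card (cball_indices P c r))
    + 2 * (real (length P) - real (card (cball_indices P c r)))) * r"
proof -
  let ?G = "cball_indices P c r"
  define g where "g = real (card ?G)"
  have "0 < length P"
    using winner by (auto simp: is_winner_def)
  with majority have "0 < g"
    unfolding g_def by linarith
  have pairwise: "(\<Sum>i\<in>?G. \<Sum>k\<in>?G. dist (P ! k) (P ! i)) \<le> sqrt 2 * g\<^sup>2 * r"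
    unfolding g_def by (rule sum_pairwise_dist_le) (auto simp: cball_indices_def)
  have "g * Dval P j = (\<Sum>i\<in>?G. Dval P j)"
    by (simp add: g_def)
  also have "\<dots> \<le> (\<Sum>i\<in>?G. (\<Sum>k\<in>?G. dist (P ! k) (P ! i)) + 2 * r * (real (length P) - g))"
  proof (rule sum_mono)
    fix i assume "i \<in> ?G"
    then have "Dval P j \<le> Dval P i"
      using winner by (simp add: is_winner_def cball_indices_def)
    also have "\<dots> \<le> (\<Sum>k\<in>?G. dist (P ! k) (P ! i)) + 2 * r * (real (length P) - g)"
      using Dval_le_of_mem_majority_cball[OF majority \<open>i \<in> ?G\<close>] by (simp add: g_def)
    finally show "Dval P j \<le> (\<Sum>k\<in>?G. dist (P ! k) (P ! i)) + 2 * r * (real (length P) - g)" .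
  qed
  also have "\<dots> = (\<Sum>i\<in>?G. \<Sum>k\<in>?G. dist (P ! k) (P ! i)) + g * (2 * r * (real (length P) - g))"
    by (simp add: sum.distrib g_def)
  also have "\<dots> \<le> sqrt 2 * g\<^sup>2 * r + g * (2 * r * (real (length P) - g))"
    using pairwise by simp
  also have "\<dots> = g * ((sqrt 2 * g + 2 * (real (length P) - g)) * r)"
    by (simp add: power2_eq_square algebra_simps)
  finally have "g * Dval P j \<le> g * ((sqrt 2 * g + 2 * (real (length P) - g)) * r)"
    by simp
  then show ?thesis
    using \<open>0 < g\<close> by (simp add: g_def)
qed

lemma Dval_gt_of_far_from_majority_cball:
  assumes majority: "7 / 10 * real (length P) \<le> real (card (cball_indices P c r))"
    and j: "j < length P" and far: "5 * r < dist (P ! j) c"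
  shows "4 * r * (real (card (cball_indices P c r)) - 3 / 10 * real (length P)) < Dval P j"
proof -
  let ?G = "cball_indices P c r" and ?B = "cball_indices P (P ! j) (rho P j)"
  have "P \<noteq> []"
    using j by auto
  then have ball: "7 / 10 * real (length P) \<le> real (card ?B)"
    using rho_le_iff[of P j "rho P j"] by simp
  have "card (?B \<union> ?G) \<le> length P"
    using card_mono[of "{..<length P}" "?B \<union> ?G"] cball_indices_subset by auto
  moreover have "card ?B + card ?G = card (?B \<union> ?G) + card (?B \<inter> ?G)"
    by (rule card_Un_Int) simp_all
  ultimately have overlap: "real (card ?G) - 3 / 10 * real (length P) \<le> real (card (?B \<inter> ?G))"
    using ball by linarith
  moreover have "0 < real (length P)"
    using \<open>P \<noteq> []\<close> by simp
  ultimately have "0 < card (?B \<inter> ?G)"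
    using majority by linarith
  then have "?B \<inter> ?G \<noteq> {}"
    by (metis card.empty less_irrefl)
  then have "0 \<le> r"
    by (auto intro: mem_cball_indices_imp_nonneg)
  have "4 * r * (real (card ?G) - 3 / 10 * real (length P)) \<le> 4 * r * real (card (?B \<inter> ?G))"
    by (rule mult_left_mono[OF overlap]) (use \<open>0 \<le> r\<close> in simp)
  also have "\<dots> = (\<Sum>k\<in>?B \<inter> ?G. 4 * r)"
    by simp
  also have "\<dots> < (\<Sum>k\<in>?B \<inter> ?G. dist (P ! k) (P ! j))"
  proof (rule sum_strict_mono)
    fix k assume "k \<in> ?B \<inter> ?G"
    then have "dist (P ! k) c \<le> r"
      by (simp add: cball_indices_def)
    moreover have "dist (P ! j) c \<le> dist (P ! k) (P ! j) + dist (P ! k) c"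
      by (rule dist_triangle3)
    ultimately show "4 * r < dist (P ! k) (P ! j)"
      using far by linarith
  qed (use \<open>?B \<inter> ?G \<noteq> {}\<close> in auto)
  also have "\<dots> \<le> Dval P j"
    unfolding Dval_eq_sum_cball_indices by (intro sum_mono2) auto
  finally show ?thesis .
qed

lemma dist_winner_le_of_majority_cball:
  assumes majority: "7 / 10 * real (length P) \<le> real (card (cball_indices P c r))"
    and winner: "is_winner P j"
  shows "dist (P ! j) c \<le> 5 * r"
proof (rule ccontr)
  define N where "N = real (length P)"
  define g where "g = real (card (cball_indices P c r))"
  have j: "j < length P"
    using winner by (simp add: is_winner_def)
  assume "\<not> dist (P ! j) c \<le> 5 * r"
  then have lower: "4 * r * (g - 3 / 10 * N) < Dval P j"
    using Dval_gt_of_far_from_majority_cball[OF majority j] by (simp add: N_def g_def)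
  have maj: "7 / 10 * N \<le> g"
    using majority by (simp add: N_def g_def)
  have "0 < N"
    using j by (auto simp: N_def)
  with maj have "0 < g"
    by linarith
  then have "0 \<le> r"
    by (auto simp: g_def card_gt_0_iff intro: mem_cball_indices_imp_nonneg)
  have "sqrt 2 \<le> 142 / 100"
    by (rule real_le_lsqrt) (simp_all add: power2_eq_square)
  then have "sqrt 2 * g \<le> 142 / 100 * g"
    using \<open>0 < g\<close> by (simp add: mult_right_mono)
  then have "sqrt 2 * g + 2 * (N - g) \<le> 142 / 100 * g + 2 * (N - g)"
    by simp
  also have "\<dots> \<le> 4 * (g - 3 / 10 * N)"
    using maj \<open>0 < N\<close> by (simp add: field_simps)
  finally have coeff: "sqrt 2 * g + 2 * (N - g) \<le> 4 * (g - 3 / 10 * N)" .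
  have "Dval P j \<le> (sqrt 2 * g + 2 * (N - g)) * r"
    using Dval_winner_le_of_majority_cball[OF majority winner] by (simp add: N_def g_def)
  also have "(sqrt 2 * g + 2 * (N - g)) * r \<le> 4 * (g - 3 / 10 * N) * r"
    using coeff \<open>0 \<le> r\<close> by (rule mult_right_mono)
  also have "\<dots> = 4 * r * (g - 3 / 10 * N)"
    by simp
  finally show False
    using lower by simp
qed

theorem lemma4p4:
  fixes A P :: "'a::euclidean_space list" and \<epsilon> \<gamma> :: real and j :: nat
  assumes "A \<noteq> []"
    and "\<epsilon> > 0" and "\<gamma> > 0"
    and "real (card {i. i < length P \<and> good A \<epsilon> \<gamma> (P ! i)}) \<ge> 7 / 10 * real (length P)"
    and "is_winner P j"
  shows "good A \<epsilon> (5 * \<gamma>) (P ! j)"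
proof -
  define r where "r = \<gamma> * sqrt (\<epsilon> * Opt A / real (length A))"
  have good_iff: "good A \<epsilon> \<gamma> x \<longleftrightarrow> dist x (mean A) \<le> r" for x
    by (simp add: good_def dist_norm r_def)
  have "{i. i < length P \<and> good A \<epsilon> \<gamma> (P ! i)} = cball_indices P (mean A) r"
    by (simp add: cball_indices_def good_iff)
  with assms(4) have "7 / 10 * real (length P) \<le> real (card (cball_indices P (mean A) r))"
    by simp
  then have "dist (P ! j) (mean A) \<le> 5 * r"
    using assms(5) by (rule dist_winner_le_of_majority_cball)
  then show ?thesis
    by (simp add: good_def dist_norm r_def)
qed

end
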